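(* Let $p\ge 1$, let $n_1,\dots,n_p\ge1$ and $k_s\in[n_s]$ for each $s$. Suppose there is a maximum-size non-trivially intersecting family $\mathcal{F}\subseteq \prod_{s}\binom{[n_s]}{k_s}$ which is $Q$-shifted for some $Q\subsetneq [p]$ such that $k_t>1$ for some $t\notin Q$. Then there is a maximum-size non-trivially intersecting family $\mathcal{F}'\subseteq \prod_{s}\binom{[n_s]}{k_s}$ which is shifted.
   Context: Multi-part setting: the ground set is the disjoint union $\bigsqcup_{s=1}^p [n_s]$ of $p$ parts, $[n]=\{1,\dots,n\}$. For $F_s\subseteq[n_s]$, $\bigsqcup_s F_s$ denotes the subset having $F_s$ in part $s$; $\prod_{s}\binom{[n_s]}{k_s}$ is the collection of all $\bigsqcup_s F_s$ with $|F_s|=k_s$ for all $s$. A family is intersecting if any two of its sets intersect (in some part); trivially intersecting if some element (in some part) lies in all its sets; non-trivially intersecting if intersecting but not trivially intersecting. "Maximum-size" means of maximum size among all non-trivially intersecting subfamilies of $\prod_{s}\binom{[n_s]}{k_s}$. Shifting: for $t\in[p]$, $1\le i<j\le n_t$ and $F=\bigsqcup_s F_s$, $S_t^{i,j}(F)=F$ if $i\in F_t$ or $j\notin F_t$, and otherwise $S_t^{i,j}(F)$ replaces $F_t$ by $(F_t\setminus\{j\})\cup\{i\}$. For a family, $S_t^{i,j}(\mathcal F)=\{S_t^{i,j}(F):F\in\mathcal F\}\cup\{F: F\in\mathcal F,\ S_t^{i,j}(F)\in\mathcal F\}$. $\mathcal F$ is $t$-shifted if $S_t^{i,j}(\mathcal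 F)=\mathcal F$ for all $1\le i<j\le n_t$, and shifted if $t$-shifted for all $t\in[p]$. A non-trivially intersecting family $\mathcal F$ is $Q$-shifted (for $Q\subseteq[p]$) if it is $s$-shifted for each $s\in Q$, and for each $s\notin Q$ there are $1\le i_s<j_s\le n_s$ such that $S_s^{i_s,j_s}(\mathcal F)$ is trivially intersecting. *)

theory Defs
  imports Main
begin

text \<open>Elements of the ground set are pairs (s, x): element x of part s,
  with 1 <= s <= p and 1 <= x <= n s. A set F = disjoint union of F_s is a set of
  such pairs, with F_s = {x. (s,x) in F}.\<close>

definition ground :: "nat \<Rightarrow> (nat \<Rightarrow> nat) \<Rightarrow> (nat \<times> nat) set" where
  "ground p n = {(s, x). s \<in> {1..p} \<and> x \<in> {1..n s}}"

definition part :: "(nat \<times> nat) set \<Rightarrow> nat \<Rightarrow> nat set" where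
  "part F s = {x. (s, x) \<in> F}"

definition prod_binom :: "nat \<Rightarrow> (nat \<Rightarrow> nat) \<Rightarrow> (nat \<Rightarrow> nat) \<Rightarrow> (nat \<times> nat) set set" where
  "prod_binom p n k = {F. F \<subseteq> ground p n \<and> (\<forall>s\<in>{1..p}. card (part F s) = k s)}"

definition intersecting :: "(nat \<times> nat) set set \<Rightarrow> bool" where
  "intersecting \<F> \<longleftrightarrow> (\<forall>A\<in>\<F>. \<forall>B\<in>\<F>. A \<inter> B \<noteq> {})"

definition trivially_intersecting :: "(nat \<times> nat) set set \<Rightarrow> bool" where
  "trivially_intersecting \<F> \<longleftrightarrow> (\<exists>e. \<forall>A\<in>\<F>. e \<in> A)"

definition nontrivially_intersecting :: "(nat \<times> nat) set set \<Rightarrow> bool" where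
  "nontrivially_intersecting \<F> \<longleftrightarrow> intersecting \<F> \<and> \<not> trivially_intersecting \<F>"

definition max_nontriv :: "nat \<Rightarrow> (nat \<Rightarrow> nat) \<Rightarrow> (nat \<Rightarrow> nat) \<Rightarrow> (nat \<times> nat) set set \<Rightarrow> bool" where
  "max_nontriv p n k \<F> \<longleftrightarrow> \<F> \<subseteq> prod_binom p n k \<and> nontrivially_intersecting \<F> \<and>
     (\<forall>\<G>. \<G> \<subseteq> prod_binom p n k \<and> nontrivially_intersecting \<G> \<longrightarrow> card \<G> \<le> card \<F>)"

definition shift_set :: "nat \<Rightarrow> nat \<Rightarrow> nat \<Rightarrow> (nat \<times> nat) set \<Rightarrow> (nat \<times> nat) set" where
  "shift_set t i j F = (if (t, i) \<in> F \<or> (t, j) \<notin> F then F else (F - {(t, j)}) \<union> {(t, i)})"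

definition shift_fam :: "nat \<Rightarrow> nat \<Rightarrow> nat \<Rightarrow> (nat \<times> nat) set set \<Rightarrow> (nat \<times> nat) set set" where
  "shift_fam t i j \<F> = shift_set t i j ` \<F> \<union> {F \<in> \<F>. shift_set t i j F \<in> \<F>}"

definition part_shifted :: "(nat \<Rightarrow> nat) \<Rightarrow> nat \<Rightarrow> (nat \<times> nat) set set \<Rightarrow> bool" where
  "part_shifted n t \<F> \<longleftrightarrow> (\<forall>i j. 1 \<le> i \<and> i < j \<and> j \<le> n t \<longrightarrow> shift_fam t i j \<F> = \<F>)"

definition shifted :: "nat \<Rightarrow> (nat \<Rightarrow> nat) \<Rightarrow> (nat \<times> nat) set set \<Rightarrow> bool" where
  "shifted p n \<F> \<longleftrightarrow> (\<forall>t\<in>{1..p}. part_shifted n t \<F>)"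

definition Q_shifted :: "nat \<Rightarrow> (nat \<Rightarrow> nat) \<Rightarrow> nat set \<Rightarrow> (nat \<times> nat) set set \<Rightarrow> bool" where
  "Q_shifted p n Q \<F> \<longleftrightarrow> nontrivially_intersecting \<F> \<and>
     (\<forall>s\<in>Q. part_shifted n s \<F>) \<and>
     (\<forall>s\<in>{1..p} - Q. \<exists>i j. 1 \<le> i \<and> i < j \<and> j \<le> n s \<and>
         trivially_intersecting (shift_fam s i j \<F>))"

end

theory Submission
  imports Defs "HOL-Combinatorics.Transposition"
begin

text \<open>Every set of \<open>\<F>\<close> meets \<open>{(t,i),(t,j)}\<close>: the shifted family \<open>S_t^{i,j}(\<F>)\<close> is
  trivially intersecting, and \<open>(t,i)\<close> is the only element that shifting can make common.
  Relabelling part \<open>t\<close> we may take \<open>{i,j} = {1,2}\<close>. Maximality then forces such a family to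
  contain every set of the product containing both \<open>(t,1)\<close> and \<open>(t,2)\<close>, and a shift keeps
  the whole situation unless it makes the family trivially intersecting. Among all these
  maximum families take one of least total weight (the sum of all entries of all its sets).
  A shift that moved it would lower the weight, so it suffices to exhibit, for each shift
  \<open>S_s^{a,b}\<close>, a member avoiding \<open>(s,a)\<close> whose image is again a member. For \<open>S_t^{1,2}\<close> this
  member is the least set whose part \<open>t\<close> is \<open>{2,3,...,k_t+1}\<close>: the other shifts, which fix
  the family, push any member avoiding \<open>(t,1)\<close> down to it, and \<open>k_t > 1\<close> is what makes it
  different from its image under \<open>S_t^{1,2}\<close>.\<close>

lemma shift_set_moved:
  "(s, a) \<notin> G \<Longrightarrow> (s, b) \<in> G \<Longrightarrow> shift_set s a b G = insert (s, a) (G - {(s, b)})"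
  by (auto simp: shift_set_def)

lemma shift_set_fixed:
  "(s, a) \<in> G \<or> (s, b) \<notin> G \<Longrightarrow> shift_set s a b G = G"
  by (auto simp: shift_set_def)

lemma shift_set_subset_insert: "shift_set s a b G \<subseteq> insert (s, a) G"
  by (auto simp: shift_set_def)

lemma shift_set_keeps: "e \<in> G \<Longrightarrow> e \<noteq> (s, b) \<Longrightarrow> e \<in> shift_set s a b G"
  by (auto simp: shift_set_def)

lemma shift_set_idem: "a \<noteq> b \<Longrightarrow> shift_set s a b (shift_set s a b G) = shift_set s a b G"
  by (auto simp: shift_set_def)

lemma inj_on_shift_set_moved:
  assumes "a \<noteq> b"
  shows "inj_on (shift_set s a b) {G. shift_set s a b G \<noteq> G}"
proof (rule inj_onI)
  fix G H
  assume "G \<in> {G. shift_set s a b G \<noteq> G}" "H \<in> {G. shift_set s a b G \<noteq> G}"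
    and eq: "shift_set s a b G = shift_set s a b H"
  then have "(s, a) \<notin> G" "(s, b) \<in> G" "(s, a) \<notin> H" "(s, b) \<in> H"
    by (auto simp: shift_set_def split: if_splits)
  then have "G = insert (s, b) (shift_set s a b G - {(s, a)})"
    and "H = insert (s, b) (shift_set s a b H - {(s, a)})"
    using assms by (auto simp: shift_set_def)
  with eq show "G = H" by simp
qed

lemma shift_fam_partition:
  assumes "a \<noteq> b"
  shows "shift_fam s a b F =
    {G \<in> F. shift_set s a b G \<in> F} \<union> shift_set s a b ` {G \<in> F. shift_set s a b G \<notin> F}"
proof -
  have "shift_set s a b ` {G \<in> F. shift_set s a b G \<in> F} \<subseteq> {G \<in> F. shift_set s a b G \<in> F}"
    using shift_set_idem[OF assms] by auto
  then show ?thesis unfolding shift_fam_def by blast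
qed

lemma mem_shift_fam: "G \<in> F \<Longrightarrow> shift_set s a b G \<in> F \<Longrightarrow> G \<in> shift_fam s a b F"
  unfolding shift_fam_def by blast

lemma shift_set_mem_shift_fam: "G \<in> F \<Longrightarrow> shift_set s a b G \<in> shift_fam s a b F"
  unfolding shift_fam_def by blast

lemma shift_fam_cases:
  "X \<in> shift_fam s a b F \<Longrightarrow> X \<in> F \<or> (\<exists>G\<in>F. X = shift_set s a b G)"
  unfolding shift_fam_def by blast

lemma shift_set_mem_if_shift_fam_eq: "shift_fam s a b F = F \<Longrightarrow> G \<in> F \<Longrightarrow> shift_set s a b G \<in> F"
  unfolding shift_fam_def by blast

lemma card_shift_fam:
  assumes "a \<noteq> b" "finite F"
  shows "card (shift_fam s a b F) = card F"
proof -
  let ?K = "{G \<in> F. shift_set s a b G \<in> F}" and ?D = "{G \<in> F. shift_set s a b G \<notin> F}"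
  have inj: "inj_on (shift_set s a b) ?D"
    by (rule inj_on_subset[OF inj_on_shift_set_moved[OF assms(1)]]) auto
  have "card (shift_fam s a b F) = card ?K + card (shift_set s a b ` ?D)"
    unfolding shift_fam_partition[OF assms(1)]
    by (rule card_Un_disjoint) (use assms(2) in simp_all, blast)
  also have "\<dots> = card ?K + card ?D" using card_image[OF inj] by simp
  also have "\<dots> = card (?K \<union> ?D)"
    by (rule card_Un_disjoint[symmetric]) (use assms(2) in auto)
  also have "?K \<union> ?D = F" by blast
  finally show ?thesis .
qed

text \<open>The delicate case of the classical fact that shifting preserves the intersecting
  property: if \<open>X\<close> met \<open>H\<close> only in \<open>(s,b)\<close>, then \<open>S(X)\<close> and \<open>H\<close> would be disjoint.\<close>

lemma shift_set_meets_if_stable: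
  assumes "a \<noteq> b" "intersecting F" "X \<in> F" "shift_set s a b X \<in> F" "H \<in> F"
  shows "X \<inter> shift_set s a b H \<noteq> {}"
proof (cases "shift_set s a b H = H")
  case True
  then show ?thesis using assms(2,3,5) unfolding intersecting_def by simp
next
  case False
  then have H_ab: "(s, a) \<notin> H" "(s, b) \<in> H" by (auto simp: shift_set_def split: if_splits)
  show ?thesis
  proof
    assume disj: "X \<inter> shift_set s a b H = {}"
    have only_b: "X \<inter> H \<subseteq> {(s, b)}"
    proof
      fix e assume "e \<in> X \<inter> H"
      then show "e \<in> {(s, b)}" using disj shift_set_keeps[of e H s b a] by blast
    qed
    then have X_b: "(s, b) \<in> X" using assms(2,3,5) unfolding intersecting_def by blast
    have "(s, a) \<in> shift_set s a b H" using shift_set_moved[OF H_ab] by simp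
    then have "(s, a) \<notin> X" using disj by blast
    then have "shift_set s a b X = insert (s, a) (X - {(s, b)})" using X_b by (rule shift_set_moved)
    then have "shift_set s a b X \<inter> H = {}"
      using only_b H_ab(1) by (simp add: Int_insert_left) blast
    then show False using assms(2,4,5) unfolding intersecting_def by blast
  qed
qed

lemma intersecting_shift_fam:
  assumes "a \<noteq> b" "intersecting F"
  shows "intersecting (shift_fam s a b F)"
  unfolding intersecting_def
proof (intro ballI)
  let ?S = "shift_set s a b"
  have members: "(Z \<in> F \<and> ?S Z \<in> F) \<or> (\<exists>H\<in>F. Z = ?S H \<and> ?S H \<noteq> H)"
    if "Z \<in> shift_fam s a b F" for Z
    using that unfolding shift_fam_partition[OF assms(1)] by force
  have a_mem: "(s, a) \<in> ?S H" if "?S H \<noteq> H" for H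
    using that by (auto simp: shift_set_def split: if_splits)
  note stable = shift_set_meets_if_stable[OF assms]
  fix X Y assume X: "X \<in> shift_fam s a b F" and Y: "Y \<in> shift_fam s a b F"
  show "X \<inter> Y \<noteq> {}"
  proof (cases "X \<in> F \<and> ?S X \<in> F")
    case X_stable: True
    show ?thesis
    proof (cases "Y \<in> F \<and> ?S Y \<in> F")
      case True
      then show ?thesis using X_stable assms(2) unfolding intersecting_def by blast
    next
      case False
      then obtain H where "H \<in> F" "Y = ?S H" using members[OF Y] by blast
      then show ?thesis using stable X_stable by blast
    qed
  next
    case False
    then obtain G where G: "G \<in> F" "X = ?S G" "?S G \<noteq> G" using members[OF X] by blast
    show ?thesis
    proof (cases "Y \<in> F \<and> ?S Y \<in> F")
      case True
      then show ?thesis using stable[where X = Y and H = G] G by blast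
    next
      case False
      then obtain H where "H \<in> F" "Y = ?S H" "?S H \<noteq> H" using members[OF Y] by blast
      then show ?thesis using G a_mem by blast
    qed
  qed
qed

lemma common_elem_shift_fam:
  assumes "\<forall>X\<in>shift_fam s a b F. e \<in> X" "e \<noteq> (s, a)"
  shows "\<forall>G\<in>F. e \<in> G"
proof
  fix G assume "G \<in> F"
  then have "e \<in> shift_set s a b G" using assms(1) shift_set_mem_shift_fam by blast
  then show "e \<in> G" using shift_set_subset_insert[of s a b G] assms(2) by blast
qed

lemma nontriv_shift_fam:
  assumes "\<not> trivially_intersecting F" "H \<in> F" "(s, a) \<notin> H" "shift_set s a b H \<in> F"
  shows "\<not> trivially_intersecting (shift_fam s a b F)"
proof
  assume "trivially_intersecting (shift_fam s a b F)"
  then obtain e where e: "\<forall>X\<in>shift_fam s a b F. e \<in> X"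
    unfolding trivially_intersecting_def by blast
  have "H \<in> shift_fam s a b F" using mem_shift_fam[OF assms(2,4)] .
  then have "e \<noteq> (s, a)" using e assms(3) by blast
  then show False
    using common_elem_shift_fam[OF e] assms(1) unfolding trivially_intersecting_def by blast
qed

lemma shift_fam_trivial_meets:
  assumes "\<not> trivially_intersecting F" "trivially_intersecting (shift_fam s a b F)" "G \<in> F"
  shows "(s, a) \<in> G \<or> (s, b) \<in> G"
proof -
  obtain e where e: "\<forall>X\<in>shift_fam s a b F. e \<in> X"
    using assms(2) unfolding trivially_intersecting_def by blast
  have "e = (s, a)"
    using common_elem_shift_fam[OF e] assms(1) unfolding trivially_intersecting_def by blast
  then have "(s, a) \<in> shift_set s a b G" using e shift_set_mem_shift_fam[OF assms(3)] by blast
  then show ?thesis by (auto simp: shift_set_def split: if_splits)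
qed

lemma intersecting_insert:
  assumes "intersecting F" "H \<noteq> {}" "\<forall>G\<in>F. H \<inter> G \<noteq> {}"
  shows "intersecting (insert H F)"
  using assms unfolding intersecting_def by (simp add: Int_commute)

definition set_weight :: "(nat \<times> nat) set \<Rightarrow> nat" where
  "set_weight G = sum snd G"

definition fam_weight :: "(nat \<times> nat) set set \<Rightarrow> nat" where
  "fam_weight F = sum set_weight F"

lemma set_weight_shift_set:
  assumes "finite G" "(s, a) \<notin> G" "(s, b) \<in> G"
  shows "set_weight (shift_set s a b G) + b = set_weight G + a"
proof -
  have "set_weight (shift_set s a b G) = a + set_weight (G - {(s, b)})"
    unfolding shift_set_moved[OF assms(2,3)] set_weight_def using assms by (subst sum.insert) auto
  moreover have "set_weight G = b + set_weight (G - {(s, b)})"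
    unfolding set_weight_def using assms by (subst sum.remove[of _ "(s, b)"]) auto
  ultimately show ?thesis by simp
qed

lemma fam_weight_shift_fam_less:
  assumes "finite F" "\<forall>G\<in>F. finite G" "a < b" "shift_fam s a b F \<noteq> F"
  shows "fam_weight (shift_fam s a b F) < fam_weight F"
proof -
  let ?S = "shift_set s a b"
  let ?K = "{G \<in> F. ?S G \<in> F}" and ?D = "{G \<in> F. ?S G \<notin> F}"
  have ab: "a \<noteq> b" using assms(3) by simp
  have "?D \<noteq> {}"
  proof
    assume "?D = {}"
    then have "?K = F" by blast
    then show False using assms(4) \<open>?D = {}\<close> unfolding shift_fam_partition[OF ab] by simp
  qed
  have inj: "inj_on ?S ?D"
    by (rule inj_on_subset[OF inj_on_shift_set_moved[OF ab]]) auto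
  have lowers: "set_weight (?S G) < set_weight G" if "G \<in> ?D" for G
  proof -
    have "?S G \<noteq> G" using that by auto
    then have "(s, a) \<notin> G" "(s, b) \<in> G" using shift_set_fixed by blast+
    then show ?thesis using set_weight_shift_set[of G s a b] assms(2,3) that by auto
  qed
  have "fam_weight (shift_fam s a b F) = fam_weight ?K + fam_weight (?S ` ?D)"
    unfolding shift_fam_partition[OF ab] fam_weight_def
    by (rule sum.union_disjoint) (use assms(1) in simp_all, blast)
  also have "fam_weight (?S ` ?D) = (\<Sum>G\<in>?D. set_weight (?S G))"
    unfolding fam_weight_def by (rule sum.reindex[OF inj, unfolded comp_def])
  also have "(\<Sum>G\<in>?D. set_weight (?S G)) < (\<Sum>G\<in>?D. set_weight G)"
    by (rule sum_strict_mono) (use assms(1) \<open>?D \<noteq> {}\<close> lowers in auto)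
  also have "fam_weight ?K + (\<Sum>G\<in>?D. set_weight G) = fam_weight (?K \<union> ?D)"
    unfolding fam_weight_def by (rule sum.union_disjoint[symmetric]) (use assms(1) in auto)
  also have "?K \<union> ?D = F" by blast
  finally show ?thesis by simp
qed

lemma finite_ground: "finite (ground p n)"
proof -
  have "ground p n = Sigma {1..p} (\<lambda>s. {1..n s})" unfolding ground_def by auto
  then show ?thesis by simp
qed

lemma prod_binom_subset_ground: "G \<in> prod_binom p n k \<Longrightarrow> G \<subseteq> ground p n"
  unfolding prod_binom_def by blast

lemma finite_prod_binom: "finite (prod_binom p n k)"
proof -
  have "prod_binom p n k \<subseteq> Pow (ground p n)" unfolding prod_binom_def by auto
  then show ?thesis using finite_ground finite_subset by blast
qed

lemma finite_prod_binom_mem: "G \<in> prod_binom p n k \<Longrightarrow> finite G"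
  by (rule finite_subset[OF prod_binom_subset_ground finite_ground])

lemma part_prod_binom_subset: "G \<in> prod_binom p n k \<Longrightarrow> part G s \<subseteq> {1..n s}"
  unfolding prod_binom_def part_def ground_def by auto

lemma card_part_prod_binom: "G \<in> prod_binom p n k \<Longrightarrow> s \<in> {1..p} \<Longrightarrow> card (part G s) = k s"
  unfolding prod_binom_def by blast

lemma part_shift_set:
  "(s, a) \<notin> G \<Longrightarrow> (s, b) \<in> G \<Longrightarrow>
    part (shift_set s a b G) s' = (if s' = s then insert a (part G s - {b}) else part G s')"
  unfolding shift_set_moved part_def by auto

lemma shift_set_prod_binom:
  assumes "G \<in> prod_binom p n k" "s \<in> {1..p}" "1 \<le> a" "a < b" "b \<le> n s"
  shows "shift_set s a b G \<in> prod_binom p n k"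
proof (cases "(s, a) \<in> G \<or> (s, b) \<notin> G")
  case True
  then show ?thesis using assms(1) shift_set_fixed by simp
next
  case False
  then have moved: "(s, a) \<notin> G" "(s, b) \<in> G" by auto
  have "(s, a) \<in> ground p n" using assms(2-5) unfolding ground_def by auto
  then have "shift_set s a b G \<subseteq> ground p n"
    unfolding shift_set_moved[OF moved] using prod_binom_subset_ground[OF assms(1)] by blast
  moreover have "card (part (shift_set s a b G) s) = card (part G s)"
  proof -
    have fin: "finite (part G s)"
      using part_prod_binom_subset[OF assms(1)] by (rule finite_subset) simp
    have ab: "a \<notin> part G s" "b \<in> part G s" using moved unfolding part_def by auto
    then have "card (part G s) > 0" using fin card_gt_0_iff by blast
    then show ?thesis using part_shift_set[OF moved, of s] fin ab
      by (simp add: card_insert_disjoint card_Diff_singleton)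
  qed
  ultimately show ?thesis
    using assms(1) part_shift_set[OF moved] unfolding prod_binom_def by auto
qed

definition of_parts :: "nat \<Rightarrow> (nat \<Rightarrow> nat set) \<Rightarrow> (nat \<times> nat) set" where
  "of_parts p R = {(s, c). s \<in> {1..p} \<and> c \<in> R s}"

lemma part_of_parts: "s \<in> {1..p} \<Longrightarrow> part (of_parts p R) s = R s"
  unfolding of_parts_def part_def by auto

lemma of_parts_prod_binom:
  assumes "\<forall>s\<in>{1..p}. R s \<subseteq> {1..n s} \<and> card (R s) = k s"
  shows "of_parts p R \<in> prod_binom p n k"
proof -
  have "of_parts p R \<subseteq> ground p n"
    using assms unfolding of_parts_def ground_def by fastforce
  then show ?thesis using assms part_of_parts unfolding prod_binom_def by auto
qed

lemma prod_binom_eq_of_parts: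
  assumes "G \<in> prod_binom p n k" "\<forall>s\<in>{1..p}. part G s = R s"
  shows "G = of_parts p R"
proof -
  have "\<forall>s\<in>{1..p}. \<forall>c. (s, c) \<in> G \<longleftrightarrow> c \<in> R s"
    using assms(2) unfolding part_def by blast
  then show ?thesis
    using prod_binom_subset_ground[OF assms(1)] unfolding of_parts_def ground_def by auto
qed

lemma obtain_subset_avoiding_with_card:
  assumes "A \<subseteq> {1..N}" "A \<inter> B = {}" "finite B" "card A \<le> r" "r + card B \<le> N"
  obtains R where "A \<subseteq> R" "R \<subseteq> {1..N}" "R \<inter> B = {}" "card R = r"
proof -
  define C where "C = {1..N} - B - A"
  have fin_A: "finite A" using assms(1) by (rule finite_subset) simp
  have "card {1..N} \<le> card (C \<union> (B \<union> A))"
    by (rule card_mono) (use fin_A assms(3) in \<open>auto simp: C_def\<close>)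
  also have "\<dots> \<le> card C + card (B \<union> A)" by (rule card_Un_le)
  also have "card (B \<union> A) \<le> card B + card A" by (rule card_Un_le)
  finally have "r - card A \<le> card C" using assms(5) by simp
  then obtain T where T: "T \<subseteq> C" "card T = r - card A"
    by (rule obtain_subset_with_card_n)
  have "finite T" using T(1) by (rule finite_subset) (simp add: C_def)
  moreover have "A \<inter> T = {}" using T(1) unfolding C_def by blast
  ultimately have "card (A \<union> T) = r" using T(2) assms(4) fin_A by (simp add: card_Un_disjoint)
  moreover have "A \<union> T \<subseteq> {1..N}" "(A \<union> T) \<inter> B = {}"
    using T(1) assms(1,2) unfolding C_def by blast+
  ultimately show ?thesis using that[of "A \<union> T"] by blast
qed

lemma exists_gap_below:
  assumes "finite X" "\<forall>c\<in>X. m \<le> c" "X \<noteq> {m..<m + card X}"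
  shows "\<exists>a b. b \<in> X \<and> m \<le> a \<and> a < b \<and> a \<notin> X"
proof (rule ccontr)
  assume no_gap: "\<nexists>a b. b \<in> X \<and> m \<le> a \<and> a < b \<and> a \<notin> X"
  have "X \<subseteq> {m..<m + card X}"
  proof
    fix c assume c: "c \<in> X"
    have "{m..c} \<subseteq> X"
    proof
      fix d assume "d \<in> {m..c}"
      then have "d = c \<or> m \<le> d \<and> d < c" by auto
      then show "d \<in> X" using no_gap c by blast
    qed
    then have "card {m..c} \<le> card X" by (rule card_mono[OF assms(1)])
    then show "c \<in> {m..<m + card X}" using assms(2) c by auto
  qed
  then show False using card_subset_eq[OF finite_atLeastLessThan] assms(3) by simp
qed
lemma max_nontrivD:
  assumes "max_nontriv p n k F"
  shows "F \<subseteq> prod_binom p n k" "intersecting F" "\<not> trivially_intersecting F"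
    "G \<subseteq> prod_binom p n k \<Longrightarrow> nontrivially_intersecting G \<Longrightarrow> card G \<le> card F"
  using assms unfolding max_nontriv_def nontrivially_intersecting_def by blast+

lemma max_nontrivI:
  assumes "F \<subseteq> prod_binom p n k" "intersecting F" "\<not> trivially_intersecting F"
    and "\<And>G. G \<subseteq> prod_binom p n k \<Longrightarrow> nontrivially_intersecting G \<Longrightarrow> card G \<le> card F"
  shows "max_nontriv p n k F"
  using assms unfolding max_nontriv_def nontrivially_intersecting_def by blast

lemma k_less_n_if_nontriv:
  assumes "F \<subseteq> prod_binom p n k" "\<not> trivially_intersecting F"
    and "s \<in> {1..p}" "1 \<le> k s" "k s \<le> n s"
  shows "k s < n s"
proof (rule ccontr)
  assume "\<not> k s < n s"
  then have full: "k s = n s" using assms(5) by simp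
  have "(s, 1) \<in> G" if "G \<in> F" for G
  proof -
    have G: "G \<in> prod_binom p n k" using assms(1) that by blast
    have "part G s = {1..n s}"
      using card_subset_eq[OF _ part_prod_binom_subset[OF G]] card_part_prod_binom[OF G assms(3)]
        full by simp
    then show ?thesis using assms(4) full unfolding part_def by auto
  qed
  then show False using assms(2) unfolding trivially_intersecting_def by blast
qed

lemma max_nontriv_shift_fam:
  assumes "max_nontriv p n k F" "s \<in> {1..p}" "1 \<le> a" "a < b" "b \<le> n s"
    and "\<not> trivially_intersecting (shift_fam s a b F)"
  shows "max_nontriv p n k (shift_fam s a b F)"
proof (rule max_nontrivI)
  note F = max_nontrivD[OF assms(1)]
  have "shift_set s a b G \<in> prod_binom p n k" if "G \<in> F" for G
    using shift_set_prod_binom[of G p n k s a b] F(1) that assms(2-5) by blast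
  then show "shift_fam s a b F \<subseteq> prod_binom p n k"
    using F(1) unfolding shift_fam_def by blast
  show "intersecting (shift_fam s a b F)"
    using intersecting_shift_fam F(2) assms(4) by simp
  have "card (shift_fam s a b F) = card F"
    using card_shift_fam assms(4) finite_subset[OF F(1) finite_prod_binom] by simp
  then show "card G \<le> card (shift_fam s a b F)"
    if "G \<subseteq> prod_binom p n k" "nontrivially_intersecting G" for G
    using F(4)[OF that] by simp
qed (fact assms(6))

lemma max_nontriv_image:
  assumes "bij \<pi>" "\<forall>G\<in>prod_binom p n k. \<pi> ` G \<in> prod_binom p n k" "max_nontriv p n k F"
  shows "max_nontriv p n k ((`) \<pi> ` F)"
proof (rule max_nontrivI)
  note F = max_nontrivD[OF assms(3)]
  have inj: "inj \<pi>" using assms(1) by (rule bij_is_inj)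
  show "(`) \<pi> ` F \<subseteq> prod_binom p n k"
  proof
    fix X assume "X \<in> (`) \<pi> ` F"
    then obtain A where "A \<in> F" "X = \<pi> ` A" by (rule imageE)
    then show "X \<in> prod_binom p n k" using assms(2) F(1) by auto
  qed
  show "intersecting ((`) \<pi> ` F)"
    unfolding intersecting_def
  proof (intro ballI)
    fix X Y assume "X \<in> (`) \<pi> ` F" "Y \<in> (`) \<pi> ` F"
    then obtain A B where AB: "A \<in> F" "B \<in> F" "X = \<pi> ` A" "Y = \<pi> ` B" by (meson imageE)
    have "A \<inter> B \<noteq> {}" using F(2) AB(1,2) unfolding intersecting_def by simp
    then show "X \<inter> Y \<noteq> {}" unfolding AB(3,4) image_Int[OF inj, symmetric] by simp
  qed
  show "\<not> trivially_intersecting ((`) \<pi> ` F)"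
  proof
    assume "trivially_intersecting ((`) \<pi> ` F)"
    then obtain e where e: "\<forall>G\<in>F. e \<in> \<pi> ` G" unfolding trivially_intersecting_def by auto
    have "\<pi> (inv \<pi> e) = e" using assms(1) by (simp add: bij_is_surj surj_f_inv_f)
    then have "\<forall>G\<in>F. inv \<pi> e \<in> G" using e by (metis inj_image_mem_iff[OF inj])
    then show False using F(3) unfolding trivially_intersecting_def by blast
  qed
  have "card ((`) \<pi> ` F) = card F"
    by (rule card_image, rule inj_on_image, rule inj_on_subset[OF inj subset_UNIV])
  then show "card G \<le> card ((`) \<pi> ` F)"
    if "G \<subseteq> prod_binom p n k" "nontrivially_intersecting G" for G
    using F(4)[OF that] by simp
qed

definition relabel_part :: "nat \<Rightarrow> (nat \<Rightarrow> nat) \<Rightarrow> nat \<times> nat \<Rightarrow> nat \<times> nat" where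
  "relabel_part t \<sigma> = (\<lambda>(s, c). (s, if s = t then \<sigma> c else c))"

lemma bij_relabel_part: "bij \<sigma> \<Longrightarrow> bij (relabel_part t \<sigma>)"
  unfolding relabel_part_def
  by (rule o_bij[where g = "\<lambda>(s, c). (s, if s = t then inv \<sigma> c else c)"])
    (auto simp: bij_def surj_f_inv_f)

lemma part_image_relabel_part:
  "part (relabel_part t \<sigma> ` G) s = (if s = t then \<sigma> ` part G s else part G s)"
  unfolding relabel_part_def part_def by (auto simp: image_iff) force+

lemma relabel_part_prod_binom:
  assumes "bij \<sigma>" "\<sigma> ` {1..n t} = {1..n t}" "G \<in> prod_binom p n k"
  shows "relabel_part t \<sigma> ` G \<in> prod_binom p n k"
  unfolding prod_binom_def
proof (intro CollectI conjI ballI)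
  show "relabel_part t \<sigma> ` G \<subseteq> ground p n"
  proof
    fix y assume "y \<in> relabel_part t \<sigma> ` G"
    then obtain s c where sc: "(s, c) \<in> G" "y = (s, if s = t then \<sigma> c else c)"
      unfolding relabel_part_def by auto
    then have "s \<in> {1..p}" "c \<in> {1..n s}"
      using prod_binom_subset_ground[OF assms(3)] unfolding ground_def by auto
    then show "y \<in> ground p n" using sc(2) assms(2) unfolding ground_def by auto
  qed
  have "card (\<sigma> ` part G t) = card (part G t)"
    by (rule card_image[OF inj_on_subset[OF bij_is_inj[OF assms(1)] subset_UNIV]])
  then show "card (part (relabel_part t \<sigma> ` G) s) = k s" if "s \<in> {1..p}" for s
    using card_part_prod_binom[OF assms(3) that]
    by (cases "s = t") (simp_all add: part_image_relabel_part)
qed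

lemma exists_max_nontriv_meeting_12:
  assumes "max_nontriv p n k F" "t \<in> {1..p}" "1 \<le> i" "i < j" "j \<le> n t"
    and "\<forall>G\<in>F. (t, i) \<in> G \<or> (t, j) \<in> G"
  shows "\<exists>F'. max_nontriv p n k F' \<and> (\<forall>G\<in>F'. (t, 1) \<in> G \<or> (t, 2) \<in> G)"
proof -
  define \<sigma> where "\<sigma> = transpose 2 j \<circ> transpose 1 i"
  have bij: "bij \<sigma>" unfolding \<sigma>_def by (simp add: bij_comp)
  have "transpose 1 i ` {1..n t} = {1..n t}" "transpose 2 j ` {1..n t} = {1..n t}"
    using assms(3-5) by simp_all
  then have img: "\<sigma> ` {1..n t} = {1..n t}"
    unfolding \<sigma>_def by (simp only: image_comp[symmetric])
  have "max_nontriv p n k ((`) (relabel_part t \<sigma>) ` F)"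
    by (rule max_nontriv_image[OF bij_relabel_part[OF bij] _ assms(1)])
      (use relabel_part_prod_binom[where t = t and n = n, OF bij img] in blast)
  moreover have "(t, 1) \<in> G \<or> (t, 2) \<in> G" if G: "G \<in> (`) (relabel_part t \<sigma>) ` F" for G
  proof -
    obtain G0 where G0: "G0 \<in> F" "G = relabel_part t \<sigma> ` G0" using G by blast
    have "\<sigma> i = 1" "\<sigma> j = 2" using assms(3,4) unfolding \<sigma>_def by auto
    then have "relabel_part t \<sigma> (t, i) = (t, 1)" "relabel_part t \<sigma> (t, j) = (t, 2)"
      unfolding relabel_part_def by simp_all
    moreover have "relabel_part t \<sigma> (t, i) \<in> G \<or> relabel_part t \<sigma> (t, j) \<in> G"
      using assms(6) G0 by blast
    ultimately show ?thesis by simp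
  qed
  ultimately show ?thesis by (intro exI[of _ "(`) (relabel_part t \<sigma>) ` F"]) blast
qed

lemma shift_set_meets_12:
  assumes "(t, 1) \<in> G \<or> (t, 2) \<in> G" "1 \<le> a" "a < b"
  shows "(t, 1) \<in> shift_set s a b G \<or> (t, 2) \<in> shift_set s a b G"
proof (cases "(s, a) \<notin> G \<and> (s, b) \<in> G")
  case True
  then show ?thesis using assms by (auto simp: shift_set_moved)
next
  case False
  then show ?thesis using assms(1) shift_set_fixed by auto
qed

text \<open>The situation of the theorem after relabelling part \<open>t\<close>; the assumption \<open>k_s < n_s\<close>
  holds automatically for non-trivially intersecting families.\<close>

locale pinned_pair =
  fixes p :: nat and n k :: "nat \<Rightarrow> nat" and t :: nat
  assumes t_part: "t \<in> {1..p}" and two_le_k: "2 \<le> k t"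
    and k_less_n: "\<forall>s\<in>{1..p}. k s < n s"
begin

definition pinned_max :: "(nat \<times> nat) set set set" where
  "pinned_max = {F. max_nontriv p n k F \<and> (\<forall>G\<in>F. (t, 1) \<in> G \<or> (t, 2) \<in> G)}"

lemma pinned_maxD:
  assumes "F \<in> pinned_max"
  shows "max_nontriv p n k F" "F \<subseteq> prod_binom p n k" "intersecting F"
    "\<exists>H\<in>F. e \<notin> H" "finite F" "G \<in> F \<Longrightarrow> (t, 1) \<in> G \<or> (t, 2) \<in> G"
proof -
  show mx: "max_nontriv p n k F" and "G \<in> F \<Longrightarrow> (t, 1) \<in> G \<or> (t, 2) \<in> G"
    using assms unfolding pinned_max_def by blast+
  then show sub: "F \<subseteq> prod_binom p n k" and "intersecting F" and "\<exists>H\<in>F. e \<notin> H"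
    unfolding max_nontriv_def nontrivially_intersecting_def trivially_intersecting_def
    by blast+
  show "finite F" using finite_subset[OF sub finite_prod_binom] .
qed

lemma obtain_pair_set_avoiding:
  assumes "s \<in> {1..p}" "(s, c) \<noteq> (t, 1)" "(s, c) \<noteq> (t, 2)"
  obtains H where "H \<in> prod_binom p n k" "(t, 1) \<in> H" "(t, 2) \<in> H" "(s, c) \<notin> H"
proof -
  have "k t < n t" "k s < n s" using k_less_n t_part assms(1) by blast+
  obtain Rt where Rt: "{1, 2} \<subseteq> Rt" "Rt \<subseteq> {1..n t}"
      "Rt \<inter> (if s = t then {c} else {}) = {}" "card Rt = k t"
    by (rule obtain_subset_avoiding_with_card[of "{1, 2}" "n t" "if s = t then {c} else {}" "k t"])
      (use assms(2,3) two_le_k \<open>k t < n t\<close> in auto)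
  obtain Rs where Rs: "{} \<subseteq> Rs" "Rs \<subseteq> {1..n s}" "Rs \<inter> {c} = {}" "card Rs = k s"
    by (rule obtain_subset_avoiding_with_card[of "{}" "n s" "{c}" "k s"]) (use \<open>k s < n s\<close> in auto)
  define R where "R s' = (if s' = t then Rt else if s' = s then Rs else {1..k s'})" for s'
  have "of_parts p R \<in> prod_binom p n k"
    using Rt Rs k_less_n unfolding R_def by (intro of_parts_prod_binom) auto
  moreover have "(t, 1) \<in> of_parts p R" "(t, 2) \<in> of_parts p R" "(s, c) \<notin> of_parts p R"
    using Rt Rs t_part unfolding of_parts_def R_def by (auto split: if_splits)
  ultimately show ?thesis using that by blast
qed

text \<open>Maximality: such a set meets every member of the family in \<open>(t,1)\<close> or \<open>(t,2)\<close>.\<close>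

lemma pair_set_mem:
  assumes "F \<in> pinned_max" "H \<in> prod_binom p n k" "(t, 1) \<in> H" "(t, 2) \<in> H"
  shows "H \<in> F"
proof (rule ccontr)
  assume "H \<notin> F"
  have "insert H F \<subseteq> prod_binom p n k" using pinned_maxD(2)[OF assms(1)] assms(2) by blast
  moreover have "intersecting (insert H F)"
    using pinned_maxD(3,6)[OF assms(1)] assms(3,4) by (intro intersecting_insert) blast+
  moreover have "\<not> trivially_intersecting (insert H F)"
    using pinned_maxD(4)[OF assms(1)] unfolding trivially_intersecting_def by blast
  ultimately have "card (insert H F) \<le> card F"
    using pinned_maxD(1)[OF assms(1)]
    unfolding max_nontriv_def nontrivially_intersecting_def by blast
  then show False using \<open>H \<notin> F\<close> pinned_maxD(5)[OF assms(1)] by simp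
qed

lemma shift_fam_pinned_max:
  assumes "F \<in> pinned_max" "s \<in> {1..p}" "1 \<le> a" "a < b" "b \<le> n s"
    and "\<not> trivially_intersecting (shift_fam s a b F)"
  shows "shift_fam s a b F \<in> pinned_max"
proof -
  have "(t, 1) \<in> X \<or> (t, 2) \<in> X" if "X \<in> shift_fam s a b F" for X
    using shift_fam_cases[OF that] pinned_maxD(6)[OF assms(1)] shift_set_meets_12 assms(3,4)
    by blast
  then show ?thesis
    using max_nontriv_shift_fam[OF pinned_maxD(1)[OF assms(1)] assms(2-6)]
    unfolding pinned_max_def by blast
qed

text \<open>A family of least weight is fixed by every shift that keeps some member \<open>H\<close>
  avoiding \<open>(s,a)\<close>: the shifted family still contains \<open>H\<close>, so it is again in
  \<^term>\<open>pinned_max\<close>, and a proper shift lowers the weight.\<close>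

lemma shift_fam_eq_if_least_weight:
  assumes F: "F \<in> pinned_max" and least: "\<forall>F'\<in>pinned_max. fam_weight F \<le> fam_weight F'"
    and shift: "s \<in> {1..p}" "1 \<le> a" "a < b" "b \<le> n s"
    and H: "H \<in> F" "(s, a) \<notin> H" "shift_set s a b H \<in> F"
  shows "shift_fam s a b F = F"
proof (rule ccontr)
  assume moved: "shift_fam s a b F \<noteq> F"
  have "\<not> trivially_intersecting F"
    using pinned_maxD(4)[OF F] unfolding trivially_intersecting_def by blast
  then have "\<not> trivially_intersecting (shift_fam s a b F)"
    by (rule nontriv_shift_fam[OF _ H])
  then have "fam_weight F \<le> fam_weight (shift_fam s a b F)"
    using least shift_fam_pinned_max[OF F shift] by blast
  moreover have "\<forall>G\<in>F. finite G"
    using pinned_maxD(2)[OF F] finite_prod_binom_mem by blast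
  then have "fam_weight (shift_fam s a b F) < fam_weight F"
    using fam_weight_shift_fam_less pinned_maxD(5)[OF F] shift(3) moved by blast
  ultimately show False by simp
qed

lemma shift_set_mem_if_pair:
  assumes "F \<in> pinned_max" "H \<in> F" "s \<in> {1..p}" "1 \<le> a" "a < b" "b \<le> n s"
    and "(t, 1) \<in> shift_set s a b H" "(t, 2) \<in> shift_set s a b H"
  shows "shift_set s a b H \<in> F"
proof (rule pair_set_mem[OF assms(1) _ assms(7,8)])
  have "H \<in> prod_binom p n k" using pinned_maxD(2)[OF assms(1)] assms(2) by blast
  then show "shift_set s a b H \<in> prod_binom p n k"
    using shift_set_prod_binom assms(3-6) by blast
qed

lemma obtain_shift_witness:
  assumes F: "F \<in> pinned_max" and shift: "s \<in> {1..p}" "1 \<le> a" "a < b" "b \<le> n s"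
    and not_12: "(s, a, b) \<noteq> (t, 1, 2)"
  obtains H where "H \<in> F" "(s, a) \<notin> H" "shift_set s a b H \<in> F"
proof (cases "s = t \<and> (a = 1 \<or> a = 2)")
  case True
  then have "3 \<le> b" using not_12 shift(3) by auto
  obtain H where H: "H \<in> F" "(s, a) \<notin> H" using pinned_maxD(4)[OF F] by blast
  then have other: "(t, 3 - a) \<in> H" using pinned_maxD(6)[OF F H(1)] True by auto
  show thesis
  proof (cases "shift_set s a b H = H")
    case True
    then show thesis using that H by simp
  next
    case False
    then have "(s, a) \<in> shift_set s a b H" by (auto simp: shift_set_def split: if_splits)
    moreover have "(t, 3 - a) \<in> shift_set s a b H"
      by (rule shift_set_keeps[OF other]) (use \<open>3 \<le> b\<close> \<open>s = t \<and> (a = 1 \<or> a = 2)\<close> in auto)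
    ultimately have "(t, 1) \<in> shift_set s a b H" "(t, 2) \<in> shift_set s a b H"
      using \<open>s = t \<and> (a = 1 \<or> a = 2)\<close> by auto
    then show thesis using that H shift_set_mem_if_pair[OF F H(1) shift] by blast
  qed
next
  case False
  then obtain H where H: "H \<in> prod_binom p n k" "(t, 1) \<in> H" "(t, 2) \<in> H" "(s, a) \<notin> H"
    using obtain_pair_set_avoiding[OF shift(1)] by blast
  have "H \<in> F" using pair_set_mem[OF F H(1-3)] .
  moreover have "(t, 1) \<in> shift_set s a b H" "(t, 2) \<in> shift_set s a b H"
    using shift_set_keeps[OF H(2)] shift_set_keeps[OF H(3)] False shift(2,3) by auto
  ultimately show thesis using that H(4) shift_set_mem_if_pair[OF F _ shift] by blast
qed

text \<open>The least set, in the shifting order, whose part \<open>t\<close> meets \<open>{1,2}\<close> exactly in \<open>c\<close>.\<close>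

definition least_parts :: "nat \<Rightarrow> nat \<Rightarrow> nat set" where
  "least_parts c s = (if s = t then insert c {3..k t + 1} else {1..k s})"

definition least_set :: "nat \<Rightarrow> (nat \<times> nat) set" where
  "least_set c = of_parts p (least_parts c)"

lemma obtain_lowering_shift:
  assumes G: "G \<in> prod_binom p n k" and c: "part G t \<inter> {1, 2} = {c}" and "G \<noteq> least_set c"
  obtains s a b where "s \<in> {1..p}" "1 \<le> a" "a < b" "s = t \<longrightarrow> 3 \<le> a" "(s, a) \<notin> G" "(s, b) \<in> G"
proof -
  have "\<not> (\<forall>s\<in>{1..p}. part G s = least_parts c s)"
    using prod_binom_eq_of_parts[OF G] assms(3) unfolding least_set_def by blast
  then obtain s where s: "s \<in> {1..p}" "part G s \<noteq> least_parts c s" by blast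
  have sub: "part G s \<subseteq> {1..n s}" by (rule part_prod_binom_subset[OF G])
  have fin: "finite (part G s)" using sub by (rule finite_subset) simp
  have card: "card (part G s) = k s" by (rule card_part_prod_binom[OF G s(1)])
  show thesis
  proof (cases "s = t")
    case True
    define X where "X = part G t - {c}"
    have "c \<in> part G t \<inter> {1, 2}" using c by simp
    then have c_mem: "c \<in> part G t" and c_le: "c \<le> 2" by auto
    have part_eq: "part G t = insert c X" unfolding X_def using c_mem by blast
    have X_ge: "\<forall>x\<in>X. 3 \<le> x"
    proof
      fix x assume "x \<in> X"
      then have x: "x \<in> part G t" "x \<noteq> c" unfolding X_def by simp_all
      then have "x \<notin> {1, 2}" using c by blast
      moreover have "1 \<le> x" using subsetD[OF sub x(1)[folded True]] by simp
      ultimately show "3 \<le> x" by simp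
    qed
    have fin_X: "finite X" using fin True unfolding X_def by simp
    have "card X = k t - 1"
      using card True c_mem fin unfolding X_def by (simp add: card_Diff_singleton)
    then have "3 + card X = Suc (k t + 1)" using two_le_k by simp
    then have interval: "{3..<3 + card X} = {3..k t + 1}"
      by (simp only: atLeastLessThanSuc_atLeastAtMost)
    have "X \<noteq> {3..<3 + card X}"
    proof
      assume "X = {3..<3 + card X}"
      then have "X = {3..k t + 1}" using interval by (rule trans)
      then have "part G t = least_parts c t"
        using part_eq unfolding least_parts_def by simp
      then show False using s(2) True by simp
    qed
    then obtain a b where ab: "b \<in> X" "3 \<le> a" "a < b" "a \<notin> X"
      using exists_gap_below[OF fin_X X_ge] by blast
    have "a \<noteq> c" using ab(2) c_le by simp
    then have "(t, a) \<notin> G" using ab(4) part_eq unfolding part_def by blast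
    moreover have "(t, b) \<in> G" using ab(1) part_eq unfolding part_def by blast
    ultimately show thesis using that[of t a b] ab(2,3) t_part by simp
  next
    case False
    have "{1..<1 + card (part G s)} = least_parts c s"
      using False card unfolding least_parts_def by (simp add: atLeastLessThanSuc_atLeastAtMost)
    then have "part G s \<noteq> {1..<1 + card (part G s)}" using s(2) by simp
    moreover have "\<forall>x\<in>part G s. 1 \<le> x" using sub by auto
    ultimately obtain a b where "b \<in> part G s" "1 \<le> a" "a < b" "a \<notin> part G s"
      using exists_gap_below[OF fin] by blast
    then show thesis using that[of s a b] s(1) False unfolding part_def by simp
  qed
qed

lemma least_set_mem:
  assumes F: "F \<subseteq> prod_binom p n k"
    and closed: "\<And>s a b G. s \<in> {1..p} \<Longrightarrow> 1 \<le> a \<Longrightarrow> a < b \<Longrightarrow> b \<le> n s \<Longrightarrow>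
      (s = t \<longrightarrow> 3 \<le> a) \<Longrightarrow> G \<in> F \<Longrightarrow> shift_set s a b G \<in> F"
  shows "G \<in> F \<Longrightarrow> part G t \<inter> {1, 2} = {c} \<Longrightarrow> least_set c \<in> F"
proof (induction "set_weight G" arbitrary: G rule: less_induct)
  case less
  show ?case
  proof (cases "G = least_set c")
    case True
    then show ?thesis using less.prems(1) by simp
  next
    case False
    have G: "G \<in> prod_binom p n k" using F less.prems(1) by blast
    obtain s a b where shift: "s \<in> {1..p}" "1 \<le> a" "a < b" "s = t \<longrightarrow> 3 \<le> a"
        and moved: "(s, a) \<notin> G" "(s, b) \<in> G"
      using obtain_lowering_shift[OF G less.prems(2) False] by blast
    have "b \<le> n s" using moved(2) part_prod_binom_subset[OF G, of s] unfolding part_def by auto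
    then have mem: "shift_set s a b G \<in> F" using closed shift less.prems(1) by blast
    have part: "part (shift_set s a b G) t \<inter> {1, 2} = {c}"
      using part_shift_set[OF moved, of t] less.prems(2) shift(3,4) by auto
    have "set_weight (shift_set s a b G) < set_weight G"
      using set_weight_shift_set[OF finite_prod_binom_mem[OF G] moved] shift(3) by simp
    then show ?thesis by (rule less.hyps[OF _ mem part])
  qed
qed

text \<open>The witness for \<open>S_t^{1,2}\<close>: the closure under all other shifts puts both least sets into
  the family, and the first is mapped to the second.\<close>

lemma shift_12_witness:
  assumes F: "F \<in> pinned_max"
    and fixed: "\<And>s a b. s \<in> {1..p} \<Longrightarrow> 1 \<le> a \<Longrightarrow> a < b \<Longrightarrow> b \<le> n s \<Longrightarrow>
      (s, a, b) \<noteq> (t, 1, 2) \<Longrightarrow> shift_fam s a b F = F"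
  shows "least_set 2 \<in> F" "(t, 1) \<notin> least_set 2" "shift_set t 1 2 (least_set 2) \<in> F"
proof -
  have closed: "shift_set s a b G \<in> F"
    if "s \<in> {1..p}" "1 \<le> a" "a < b" "b \<le> n s" "s = t \<longrightarrow> 3 \<le> a" "G \<in> F" for s a b G
    using shift_set_mem_if_shift_fam_eq[OF fixed that(6)] that(1-5) by auto
  have least_mem: "least_set c \<in> F" if "c \<in> {1, 2}" for c
  proof -
    obtain G where G: "G \<in> F" "(t, 3 - c) \<notin> G" using pinned_maxD(4)[OF F] by blast
    then have "(t, c) \<in> G" using pinned_maxD(6)[OF F G(1)] that by auto
    then have "part G t \<inter> {1, 2} = {c}" using G(2) that unfolding part_def by auto
    then show ?thesis using least_set_mem[OF pinned_maxD(2)[OF F] closed G(1)] by blast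
  qed
  then show "least_set 2 \<in> F" by simp
  have mem_iff: "(s, x) \<in> least_set c \<longleftrightarrow>
      (if s = t then x \<in> insert c {3..k t + 1} else s \<in> {1..p} \<and> x \<in> {1..k s})" for s x c
    using t_part unfolding least_set_def of_parts_def least_parts_def by auto
  then show "(t, 1) \<notin> least_set 2" by simp
  have "shift_set t 1 2 (least_set 2) = insert (t, 1) (least_set 2 - {(t, 2)})"
    using mem_iff by (intro shift_set_moved) simp_all
  also have "\<dots> = least_set 1"
    by (auto simp: set_eq_iff mem_iff)
  finally show "shift_set t 1 2 (least_set 2) \<in> F" using least_mem by simp
qed

lemma exists_shifted_max_nontriv:
  assumes "pinned_max \<noteq> {}"
  shows "\<exists>F. max_nontriv p n k F \<and> shifted p n F"
proof -
  obtain F where F: "F \<in> pinned_max" and least: "\<forall>F'\<in>pinned_max. fam_weight F \<le> fam_weight F'"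
    using assms ex_has_least_nat[of "\<lambda>F. F \<in> pinned_max" _ fam_weight] by blast
  have others: "shift_fam s a b F = F"
    if shift: "s \<in> {1..p}" "1 \<le> a" "a < b" "b \<le> n s" "(s, a, b) \<noteq> (t, 1, 2)" for s a b
  proof -
    obtain H where "H \<in> F" "(s, a) \<notin> H" "shift_set s a b H \<in> F"
      by (rule obtain_shift_witness[OF F shift])
    then show ?thesis by (rule shift_fam_eq_if_least_weight[OF F least shift(1-4)])
  qed
  have "2 \<le> n t" using two_le_k k_less_n t_part by force
  then have t_12: "shift_fam t 1 2 F = F"
    using shift_fam_eq_if_least_weight[OF F least t_part _ _ _ shift_12_witness[OF F others]]
    by simp
  have "shifted p n F"
    unfolding shifted_def part_shifted_def
  proof (intro ballI allI impI)
    fix s i j assume "s \<in> {1..p}" "1 \<le> i \<and> i < j \<and> j \<le> n s"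
    then show "shift_fam s i j F = F"
      using others t_12 by (cases "(s, i, j) = (t, 1, 2)") auto
  qed
  then show ?thesis using pinned_maxD(1)[OF F] by blast
qed

end

theorem lemma2p3:
  fixes p :: nat and n k :: "nat \<Rightarrow> nat"
  assumes "p \<ge> 1"
    and "\<forall>s\<in>{1..p}. n s \<ge> 1 \<and> 1 \<le> k s \<and> k s \<le> n s"
    and "\<exists>\<F> Q. max_nontriv p n k \<F> \<and> Q \<subset> {1..p} \<and> Q_shifted p n Q \<F> \<and>
           (\<exists>t\<in>{1..p} - Q. k t > 1)"
  shows "\<exists>\<F>'. max_nontriv p n k \<F>' \<and> shifted p n \<F>'"
proof -
  obtain F Q t where F: "max_nontriv p n k F" and "Q_shifted p n Q F"
    and t: "t \<in> {1..p} - Q" and "k t > 1"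
    using assms(3) by blast
  then obtain i j where ij: "1 \<le> i" "i < j" "j \<le> n t"
    and "trivially_intersecting (shift_fam t i j F)"
    unfolding Q_shifted_def by blast
  then have "\<forall>G\<in>F. (t, i) \<in> G \<or> (t, j) \<in> G"
    using shift_fam_trivial_meets[OF max_nontrivD(3)[OF F]] by blast
  then obtain F' where F': "max_nontriv p n k F'" "\<forall>G\<in>F'. (t, 1) \<in> G \<or> (t, 2) \<in> G"
    using exists_max_nontriv_meeting_12[OF F _ ij] t by blast
  have "\<forall>s\<in>{1..p}. k s < n s"
    using k_less_n_if_nontriv[OF max_nontrivD(1,3)[OF F]] assms(2) by blast
  then interpret pinned_pair p n k t
    using t \<open>k t > 1\<close> by unfold_locales auto
  have "F' \<in> pinned_max" unfolding pinned_max_def using F' by blast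
  then show ?thesis using exists_shifted_max_nontriv by blast
qed

end
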